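(* Let $M$ and $M+H$ be $n\times n$ real symmetric matrices, each of whose eigenvalues have pairwise distinct absolute values. Let $\lambda_1,\dots,\lambda_n$ be the spectrum of $M$ with $|\lambda_1|>\dots>|\lambda_n|$, and $\nu_1,\dots,\nu_n$ the spectrum of $M+H$ with $|\nu_1|>\dots>|\nu_n|$. For each $i$ let $u_i,v_i$ be eigenvectors with $Mu_i=\lambda_iu_i$ and $(M+H)v_i=\nu_iv_i$, and let $\theta_i$ be the angle between the lines spanned by $u_i$ and $v_i$. Let $\varepsilon:=\|H\|$ be the spectral norm of $H$. Then for all $i\in\{1,\dots,n\}$: (i) $|\lambda_i^2-\nu_i^2|\le\varepsilon(\varepsilon+2|\lambda_1|)$; (ii) $\sin\theta_i\le\varepsilon(\varepsilon+2|\lambda_1|)/\Delta_i$, where $\Delta_i=\min\{|\lambda_i^2-\nu_j^2|: j=1,\dots,n,\ j\ne i\}$.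
   Context: The spectral norm $\|H\|$ of a real symmetric matrix is the maximal absolute value of its eigenvalues. *)

theory Defs
  imports "HOL-Analysis.Analysis"
begin

definition eigenvalues :: "real^'n^'n \<Rightarrow> real set" where
  "eigenvalues A = {c. \<exists>x. x \<noteq> 0 \<and> A *v x = c *s x}"

text \<open>Spectral norm of a real symmetric matrix: maximal absolute value of its eigenvalues.\<close>
definition spectral_norm :: "real^'n^'n \<Rightarrow> real" where
  "spectral_norm A = Max (abs ` eigenvalues A)"

definition line_angle :: "real^'n \<Rightarrow> real^'n \<Rightarrow> real" where
  "line_angle x y = arccos (\<bar>x \<bullet> y\<bar> / (norm x * norm y))"

end

theory Submission
  imports Defs
begin

text \<open>Since the eigenvalues are ordered by absolute value, compare squares: \<open>\<lambda>\<^sub>i\<^sup>2\<close> and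
  \<open>\<nu>\<^sub>i\<^sup>2\<close> are the \<open>i\<close>-th largest eigenvalues of \<open>M\<^sup>2\<close> and \<open>(M + H)\<^sup>2\<close>, with the same eigenvectors.
  With \<open>\<epsilon> = \<parallel>H\<parallel>\<close> and \<open>e = \<epsilon> (\<epsilon> + 2 \<bar>\<lambda>\<^sub>1\<bar>)\<close>, the quadratic forms \<open>\<parallel>(M + H) x\<parallel>\<^sup>2\<close> and
  \<open>\<parallel>M x\<parallel>\<^sup>2\<close> differ by at most \<open>e \<parallel>x\<parallel>\<^sup>2\<close>, so testing both with a vector orthogonal to
  \<open>u\<^sub>1, \<dots>, u\<^sub>i\<^sub>-\<^sub>1\<close> and \<open>v\<^sub>i\<^sub>+\<^sub>1, \<dots>, v\<^sub>n\<close> (Courant--Fischer) gives (i).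
  For (ii), \<open>u\<^sub>i\<close> is an approximate eigenvector of \<open>(M + H)\<^sup>2\<close>: the residual
  \<open>(M + H)\<^sup>2 u\<^sub>i - \<lambda>\<^sub>i\<^sup>2 u\<^sub>i\<close> has norm at most \<open>e \<parallel>u\<^sub>i\<parallel>\<close>. Expanding \<open>u\<^sub>i\<close> in the eigenbasis
  \<open>v\<close>, the component of \<open>u\<^sub>i\<close> orthogonal to \<open>v\<^sub>i\<close>, of norm \<open>sin \<theta>\<^sub>i \<parallel>u\<^sub>i\<parallel>\<close>, is at most
  the residual divided by the gap \<open>\<Delta>\<^sub>i\<close> (Davis--Kahan).\<close>

section \<open>Orthogonal eigenbases of symmetric matrices\<close>

definition orthogonal_eigenbasis :: "real^'n^'n \<Rightarrow> (nat \<Rightarrow> real) \<Rightarrow> (nat \<Rightarrow> real^'n) \<Rightarrow> bool" where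
  "orthogonal_eigenbasis A a u \<longleftrightarrow>
     (\<forall>j\<in>{1..CARD('n)}. u j \<noteq> 0 \<and> A *v u j = a j *s u j) \<and>
     (\<forall>i\<in>{1..CARD('n)}. \<forall>j\<in>{1..CARD('n)}. i \<noteq> j \<longrightarrow> u i \<bullet> u j = 0)"

lemma symmetric_matrix_inner:
  fixes A :: "real^'n^'n"
  assumes "transpose A = A"
  shows "(A *v x) \<bullet> y = x \<bullet> (A *v y)"
  by (metis assms dot_lmul_matrix inner_commute transpose_matrix_vector)

lemma symmetric_eigenvectors_orthogonal:
  fixes A :: "real^'n^'n"
  assumes "transpose A = A" "A *v x = a *s x" "A *v y = b *s y" "a \<noteq> b"
  shows "x \<bullet> y = 0"
proof -
  have "a * (x \<bullet> y) = (A *v x) \<bullet> y" using assms(2) by (simp add: scalar_mult_eq_scaleR)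
  also have "\<dots> = x \<bullet> (A *v y)" using assms(1) by (rule symmetric_matrix_inner)
  also have "\<dots> = b * (x \<bullet> y)" using assms(3) by (simp add: scalar_mult_eq_scaleR)
  finally show ?thesis using assms(4) by simp
qed

lemma orthogonal_eigenbasisI:
  fixes A :: "real^'n^'n"
  assumes "transpose A = A" "inj_on a {1..CARD('n)}"
    and "\<And>j. j \<in> {1..CARD('n)} \<Longrightarrow> u j \<noteq> 0 \<and> A *v u j = a j *s u j"
  shows "orthogonal_eigenbasis A a u"
  unfolding orthogonal_eigenbasis_def
  using assms symmetric_eigenvectors_orthogonal[OF assms(1)] by (metis inj_on_def)

lemma orthogonal_eigenbasis_square:
  fixes A :: "real^'n^'n"
  assumes "orthogonal_eigenbasis A a u"
  shows "orthogonal_eigenbasis (A ** A) (\<lambda>j. (a j)\<^sup>2) u"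
  using assms unfolding orthogonal_eigenbasis_def
  by (auto simp: matrix_vector_mul_assoc[symmetric] matrix_vector_mult_scaleR scalar_mult_eq_scaleR
      power2_eq_square)

lemma parseval_orthogonal:
  fixes u :: "'i \<Rightarrow> 'a::euclidean_space"
  assumes card: "card I = DIM('a)"
    and nz: "\<And>j. j \<in> I \<Longrightarrow> u j \<noteq> 0"
    and orth: "\<And>i j. i \<in> I \<Longrightarrow> j \<in> I \<Longrightarrow> i \<noteq> j \<Longrightarrow> u i \<bullet> u j = 0"
  shows "y \<bullet> y = (\<Sum>j\<in>I. (y \<bullet> u j)\<^sup>2 / (u j \<bullet> u j))"
proof -
  have fin: "finite I" using card card_ge_0_finite[of I] by simp
  have "inj_on u I" using nz orth by (force intro: inj_onI)
  then have card_u: "card (u ` I) = DIM('a)" using card by (simp add: card_image)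
  have "pairwise orthogonal (u ` I)" "0 \<notin> u ` I"
    using nz orth by (auto simp: pairwise_def orthogonal_def)
  then have "independent (u ` I)" by (simp add: pairwise_orthogonal_independent)
  then have span_u: "span (u ` I) = UNIV"
    using card_ge_dim_independent[of "u ` I" UNIV] card_u by auto
  define c where "c j = (y \<bullet> u j) / (u j \<bullet> u j)" for j
  define z where "z = y - (\<Sum>j\<in>I. c j *\<^sub>R u j)"
  have z_orth: "z \<bullet> u k = 0" if k: "k \<in> I" for k
  proof -
    have "(\<Sum>j\<in>I. c j *\<^sub>R u j) \<bullet> u k = (\<Sum>j\<in>I. c j * (u j \<bullet> u k))"
      by (simp add: inner_sum_left)
    also have "\<dots> = c k * (u k \<bullet> u k)"
      using fin k orth by (subst sum.remove) (auto intro!: sum.neutral)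
    also have "\<dots> = y \<bullet> u k" using nz k by (simp add: c_def)
    finally show ?thesis by (simp add: z_def inner_diff_left)
  qed
  have "orthogonal z z"
  proof (rule orthogonal_to_span)
    show "z \<in> span (u ` I)" using span_u by simp
  next
    fix w assume "w \<in> u ` I"
    then show "orthogonal z w" using z_orth by (auto simp: orthogonal_def)
  qed
  then have y: "y = (\<Sum>j\<in>I. c j *\<^sub>R u j)" by (simp add: z_def orthogonal_self)
  have "y \<bullet> y = (\<Sum>j\<in>I. c j * (y \<bullet> u j))"
    by (subst (2) y) (simp add: inner_sum_right)
  then show ?thesis by (simp add: c_def power2_eq_square)
qed

lemma orthogonal_eigenbasis_inner:
  fixes A :: "real^'n^'n"
  assumes "transpose A = A" "orthogonal_eigenbasis A a u" "j \<in> {1..CARD('n)}"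
  shows "(A *v x) \<bullet> u j = a j * (x \<bullet> u j)"
  using assms symmetric_matrix_inner[OF assms(1), of x "u j"]
  by (simp add: orthogonal_eigenbasis_def scalar_mult_eq_scaleR)

lemma orthogonal_eigenbasis_parseval:
  fixes A :: "real^'n^'n"
  assumes "orthogonal_eigenbasis A a u"
  shows "norm x ^ 2 = (\<Sum>j=1..CARD('n). (x \<bullet> u j)\<^sup>2 / (u j \<bullet> u j))"
  using assms unfolding orthogonal_eigenbasis_def power2_norm_eq_inner
  by (intro parseval_orthogonal) auto

lemma orthogonal_eigenbasis_parseval_image:
  fixes A :: "real^'n^'n"
  assumes "transpose A = A" "orthogonal_eigenbasis A a u"
  shows "norm (A *v x) ^ 2 = (\<Sum>j=1..CARD('n). (a j)\<^sup>2 * ((x \<bullet> u j)\<^sup>2 / (u j \<bullet> u j)))"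
  using orthogonal_eigenbasis_parseval[OF assms(2), of "A *v x"]
  by (simp add: orthogonal_eigenbasis_inner[OF assms] power_mult_distrib)

lemma norm_matrix_sq_le_if_orthogonal_to_leading:
  fixes A :: "real^'n^'n"
  assumes "transpose A = A" "orthogonal_eigenbasis A a u"
    and sorted: "\<And>j k. 1 \<le> j \<Longrightarrow> j \<le> k \<Longrightarrow> k \<le> CARD('n) \<Longrightarrow> \<bar>a k\<bar> \<le> \<bar>a j\<bar>"
    and i: "i \<in> {1..CARD('n)}"
    and orth: "\<And>j. 1 \<le> j \<Longrightarrow> j < i \<Longrightarrow> x \<bullet> u j = 0"
  shows "norm (A *v x) ^ 2 \<le> (a i)\<^sup>2 * norm x ^ 2"
proof -
  have "(a j)\<^sup>2 * ((x \<bullet> u j)\<^sup>2 / (u j \<bullet> u j)) \<le> (a i)\<^sup>2 * ((x \<bullet> u j)\<^sup>2 / (u j \<bullet> u j))"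
    if "j \<in> {1..CARD('n)}" for j
  proof (cases "j < i")
    case False
    then have "(a j)\<^sup>2 \<le> (a i)\<^sup>2" using sorted[of i j] i that by (simp add: abs_le_square_iff)
    then show ?thesis by (rule mult_right_mono) simp
  qed (use orth that in simp)
  then have "norm (A *v x) ^ 2 \<le> (\<Sum>j=1..CARD('n). (a i)\<^sup>2 * ((x \<bullet> u j)\<^sup>2 / (u j \<bullet> u j)))"
    unfolding orthogonal_eigenbasis_parseval_image[OF assms(1,2)] by (rule sum_mono)
  then show ?thesis
    by (simp add: orthogonal_eigenbasis_parseval[OF assms(2)] sum_distrib_left)
qed

lemma norm_matrix_vector_le_leading_eigenvalue:
  fixes A :: "real^'n^'n"
  assumes "transpose A = A" "orthogonal_eigenbasis A a u"
    and "\<And>j k. 1 \<le> j \<Longrightarrow> j \<le> k \<Longrightarrow> k \<le> CARD('n) \<Longrightarrow> \<bar>a k\<bar> \<le> \<bar>a j\<bar>"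
  shows "norm (A *v x) \<le> \<bar>a 1\<bar> * norm x"
proof -
  have "norm (A *v x) ^ 2 \<le> (\<bar>a 1\<bar> * norm x) ^ 2"
    using norm_matrix_sq_le_if_orthogonal_to_leading[OF assms, of 1 x]
    by (simp add: power_mult_distrib Suc_leI)
  then show ?thesis by (rule power2_le_imp_le) simp
qed

lemma norm_matrix_sq_ge_if_orthogonal_to_trailing:
  fixes A :: "real^'n^'n"
  assumes "transpose A = A" "orthogonal_eigenbasis A a u"
    and sorted: "\<And>j k. 1 \<le> j \<Longrightarrow> j \<le> k \<Longrightarrow> k \<le> CARD('n) \<Longrightarrow> \<bar>a k\<bar> \<le> \<bar>a j\<bar>"
    and i: "i \<in> {1..CARD('n)}"
    and orth: "\<And>k. i < k \<Longrightarrow> k \<le> CARD('n) \<Longrightarrow> x \<bullet> u k = 0"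
  shows "(a i)\<^sup>2 * norm x ^ 2 \<le> norm (A *v x) ^ 2"
proof -
  have "(a i)\<^sup>2 * ((x \<bullet> u k)\<^sup>2 / (u k \<bullet> u k)) \<le> (a k)\<^sup>2 * ((x \<bullet> u k)\<^sup>2 / (u k \<bullet> u k))"
    if "k \<in> {1..CARD('n)}" for k
  proof (cases "i < k")
    case False
    then have "(a i)\<^sup>2 \<le> (a k)\<^sup>2" using sorted[of k i] i that by (simp add: abs_le_square_iff)
    then show ?thesis by (rule mult_right_mono) simp
  qed (use orth that in simp)
  then have "(\<Sum>k=1..CARD('n). (a i)\<^sup>2 * ((x \<bullet> u k)\<^sup>2 / (u k \<bullet> u k))) \<le> norm (A *v x) ^ 2"
    unfolding orthogonal_eigenbasis_parseval_image[OF assms(1,2)] by (rule sum_mono)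
  then show ?thesis
    by (simp add: orthogonal_eigenbasis_parseval[OF assms(2)] sum_distrib_left)
qed

section \<open>Courant--Fischer comparison of squared eigenvalues\<close>

lemma exists_nonzero_orthogonal_to_finite:
  fixes W :: "'a::euclidean_space set"
  assumes "finite W" "card W < DIM('a)"
  obtains x where "x \<noteq> 0" "\<And>w. w \<in> W \<Longrightarrow> x \<bullet> w = 0"
proof -
  have "dim W < DIM('a)" using assms dim_le_card' le_less_trans by blast
  then show ?thesis
    using orthogonal_to_subspace_exists that by (metis orthogonal_def span_base)
qed

lemma eigenvalue_sq_le_if_norm_sq_le:
  fixes A B :: "real^'n^'n"
  assumes "transpose A = A" "orthogonal_eigenbasis A a u"
    and sorted_a: "\<And>j k. 1 \<le> j \<Longrightarrow> j \<le> k \<Longrightarrow> k \<le> CARD('n) \<Longrightarrow> \<bar>a k\<bar> \<le> \<bar>a j\<bar>"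
    and "transpose B = B" "orthogonal_eigenbasis B b v"
    and sorted_b: "\<And>j k. 1 \<le> j \<Longrightarrow> j \<le> k \<Longrightarrow> k \<le> CARD('n) \<Longrightarrow> \<bar>b k\<bar> \<le> \<bar>b j\<bar>"
    and le: "\<And>x. norm (B *v x) ^ 2 \<le> norm (A *v x) ^ 2 + e * norm x ^ 2"
    and i: "i \<in> {1..CARD('n)}"
  shows "(b i)\<^sup>2 \<le> (a i)\<^sup>2 + e"
proof -
  let ?W = "u ` {1..<i} \<union> v ` {i<..CARD('n)}"
  have "card ?W \<le> card (u ` {1..<i}) + card (v ` {i<..CARD('n)})" by (rule card_Un_le)
  also have "\<dots> \<le> card {1..<i} + card {i<..CARD('n)}" by (intro add_mono card_image_le) auto
  also have "\<dots> < DIM(real^'n)" using i by simp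
  finally obtain x :: "real^'n" where "x \<noteq> 0" and x_orth: "\<And>w. w \<in> ?W \<Longrightarrow> x \<bullet> w = 0"
    by (rule exists_nonzero_orthogonal_to_finite[rotated]) auto
  have "(b i)\<^sup>2 * norm x ^ 2 \<le> norm (B *v x) ^ 2"
    using assms(4,5) sorted_b i
    by (rule norm_matrix_sq_ge_if_orthogonal_to_trailing) (simp_all add: x_orth)
  also have "\<dots> \<le> norm (A *v x) ^ 2 + e * norm x ^ 2" by (rule le)
  also have "\<dots> \<le> ((a i)\<^sup>2 + e) * norm x ^ 2"
    using norm_matrix_sq_le_if_orthogonal_to_leading[OF assms(1,2) sorted_a i, of x] x_orth
    by (simp add: distrib_right)
  finally show ?thesis using \<open>x \<noteq> 0\<close> by simp
qed

lemma abs_eigenvalue_sq_diff_le: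
  fixes A B :: "real^'n^'n"
  assumes "transpose A = A" "orthogonal_eigenbasis A a u"
    and "\<And>j k. 1 \<le> j \<Longrightarrow> j \<le> k \<Longrightarrow> k \<le> CARD('n) \<Longrightarrow> \<bar>a k\<bar> \<le> \<bar>a j\<bar>"
    and "transpose B = B" "orthogonal_eigenbasis B b v"
    and "\<And>j k. 1 \<le> j \<Longrightarrow> j \<le> k \<Longrightarrow> k \<le> CARD('n) \<Longrightarrow> \<bar>b k\<bar> \<le> \<bar>b j\<bar>"
    and close: "\<And>x. \<bar>norm (B *v x) ^ 2 - norm (A *v x) ^ 2\<bar> \<le> e * norm x ^ 2"
    and "i \<in> {1..CARD('n)}"
  shows "\<bar>(a i)\<^sup>2 - (b i)\<^sup>2\<bar> \<le> e"
proof -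
  have "norm (B *v x) ^ 2 \<le> norm (A *v x) ^ 2 + e * norm x ^ 2"
    and "norm (A *v x) ^ 2 \<le> norm (B *v x) ^ 2 + e * norm x ^ 2" for x
    using close[of x] unfolding abs_le_iff by linarith+
  then have "(b i)\<^sup>2 \<le> (a i)\<^sup>2 + e" and "(a i)\<^sup>2 \<le> (b i)\<^sup>2 + e"
    using eigenvalue_sq_le_if_norm_sq_le assms(1-6,8) by blast+
  then show ?thesis by linarith
qed

section \<open>The spectral norm of a symmetric matrix\<close>

lemma quadratic_nonpos_imp_linear_coeff_zero:
  fixes g b :: real
  assumes "\<And>t. 2 * t * g + t\<^sup>2 * b \<le> 0"
  shows "g = 0"
proof (rule ccontr)
  assume "g \<noteq> 0"
  define s where "s = 1 / (\<bar>b\<bar> + 1)"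
  have "0 < s" "s * \<bar>b\<bar> \<le> 1" by (simp_all add: s_def field_simps)
  then have "- 1 \<le> s * b" by (metis abs_le_iff abs_mult abs_of_pos minus_le_iff)
  have "2 * (s * g) * g + (s * g)\<^sup>2 * b = s * g\<^sup>2 * (2 + s * b)"
    by (simp add: power2_eq_square algebra_simps)
  also have "\<dots> > 0"
    using \<open>0 < s\<close> \<open>g \<noteq> 0\<close> \<open>- 1 \<le> s * b\<close> by (intro mult_pos_pos) auto
  finally show False using assms[of "s * g"] by linarith
qed

lemma norm_add_scaleR_sq:
  fixes a b :: "'a::real_inner"
  shows "norm (a + t *\<^sub>R b) ^ 2 = norm a ^ 2 + 2 * t * (a \<bullet> b) + t\<^sup>2 * norm b ^ 2"
  using dot_norm[of a "t *\<^sub>R b"] by (simp add: power_mult_distrib)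

lemma symmetric_norm_sq_maximizer_eigenvector:
  fixes H :: "real^'n^'n"
  assumes sym: "transpose H = H"
    and bound: "\<And>x. norm (H *v x) ^ 2 \<le> m * norm x ^ 2"
    and x0: "norm x0 = 1" "norm (H *v x0) ^ 2 = m"
  shows "H *v (H *v x0) = m *s x0"
proof -
  define w where "w = H *v (H *v x0) - m *\<^sub>R x0"
  \<comment> \<open>\<open>x0\<close> maximises \<open>\<parallel>H x\<parallel>\<^sup>2 - m \<parallel>x\<parallel>\<^sup>2\<close>, so the first variation in any direction \<open>y\<close> vanishes\<close>
  have "2 * t * (w \<bullet> y) + t\<^sup>2 * (norm (H *v y) ^ 2 - m * norm y ^ 2) \<le> 0" for t y
  proof -
    have "norm (H *v (x0 + t *\<^sub>R y)) ^ 2 \<le> m * norm (x0 + t *\<^sub>R y) ^ 2" by (rule bound)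
    moreover have "(H *v x0) \<bullet> (H *v y) = (H *v (H *v x0)) \<bullet> y"
      using symmetric_matrix_inner[OF sym] by simp
    ultimately show ?thesis
      using x0 by (simp add: matrix_vector_right_distrib matrix_vector_mult_scaleR norm_add_scaleR_sq
          w_def inner_diff_left algebra_simps)
  qed
  then have "w \<bullet> y = 0" for y by (rule quadratic_nonpos_imp_linear_coeff_zero)
  then have "w = 0" by (metis inner_eq_zero_iff)
  then show ?thesis by (simp add: w_def scalar_mult_eq_scaleR)
qed

lemma eigenvalue_of_square_eigenvector:
  fixes H :: "real^'n^'n"
  assumes "H *v (H *v x) = s\<^sup>2 *s x" "x \<noteq> 0"
  shows "s \<in> eigenvalues H \<or> - s \<in> eigenvalues H"
proof (cases "H *v x + s *s x = 0")
  case True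
  then have "H *v x = (- s) *s x" by (simp add: scalar_mult_eq_scaleR eq_neg_iff_add_eq_0)
  then show ?thesis using \<open>x \<noteq> 0\<close> unfolding eigenvalues_def by blast
next
  case False
  have "H *v (H *v x + s *s x) = s *s (H *v x + s *s x)"
    using assms(1) by (simp add: matrix_vector_right_distrib scalar_mult_eq_scaleR
        matrix_vector_mult_scaleR algebra_simps power2_eq_square)
  then show ?thesis using False unfolding eigenvalues_def by blast
qed

lemma symmetric_matrix_dominant_eigenvalue:
  fixes H :: "real^'n^'n"
  assumes sym: "transpose H = H"
  obtains c where "c \<in> eigenvalues H" "\<And>x. norm (H *v x) \<le> \<bar>c\<bar> * norm x"
proof -
  let ?f = "\<lambda>x. norm (H *v x) ^ 2"
  have "continuous_on (sphere (0::real^'n) 1) ?f"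
    by (intro continuous_intros linear_continuous_on matrix_vector_mul_linear)
  moreover have "sphere (0::real^'n) 1 \<noteq> {}" by simp
  ultimately obtain x0 where "x0 \<in> sphere 0 1" and max: "\<forall>y\<in>sphere 0 1. ?f y \<le> ?f x0"
    using continuous_attains_sup[OF compact_sphere] by blast
  then have x0: "norm x0 = 1" by simp
  define m where "m = ?f x0"
  have bound: "norm (H *v x) ^ 2 \<le> m * norm x ^ 2" for x
  proof (cases "x = 0")
    case False
    then have "?f (x /\<^sub>R norm x) \<le> m" using max by (simp add: m_def)
    then show ?thesis using False by (simp add: matrix_vector_mult_scaleR field_simps)
  qed simp
  define s where "s = sqrt m"
  have "H *v (H *v x0) = s\<^sup>2 *s x0"
    using symmetric_norm_sq_maximizer_eigenvector[OF sym bound x0] by (simp add: s_def m_def)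
  then have "s \<in> eigenvalues H \<or> - s \<in> eigenvalues H"
    using x0 by (intro eigenvalue_of_square_eigenvector) auto
  moreover have "norm (H *v x) \<le> s * norm x" for x
    using real_sqrt_le_mono[OF bound[of x]] by (simp add: s_def real_sqrt_mult)
  moreover have "\<bar>s\<bar> = s" "\<bar>- s\<bar> = s" by (simp_all add: s_def m_def)
  ultimately show ?thesis using that by metis
qed

lemma finite_eigenvalues_symmetric:
  fixes H :: "real^'n^'n"
  assumes sym: "transpose H = H"
  shows "finite (eigenvalues H)"
proof -
  define e where "e d = (SOME x. x \<noteq> 0 \<and> H *v x = d *s x)" for d
  have e: "e d \<noteq> 0 \<and> H *v e d = d *s e d" if "d \<in> eigenvalues H" for d
    using that unfolding e_def eigenvalues_def by (metis (mono_tags, lifting) mem_Collect_eq someI_ex)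
  have "pairwise orthogonal (e ` eigenvalues H)"
    using e symmetric_eigenvectors_orthogonal[OF sym] by (force simp: pairwise_def orthogonal_def)
  moreover have "0 \<notin> e ` eigenvalues H" using e by force
  ultimately have "finite (e ` eigenvalues H)"
    using pairwise_orthogonal_independent independent_bound by blast
  moreover have "inj_on e (eigenvalues H)"
  proof (rule inj_onI)
    fix c d assume "c \<in> eigenvalues H" "d \<in> eigenvalues H" "e c = e d"
    then have "c *s e c = d *s e c" using e by metis
    then show "c = d" using e \<open>c \<in> eigenvalues H\<close> vec.scale_cancel_right by blast
  qed
  ultimately show ?thesis using finite_imageD by blast
qed

lemma abs_eigenvalue_le_spectral_norm:
  fixes H :: "real^'n^'n"
  assumes "transpose H = H" "c \<in> eigenvalues H"
  shows "\<bar>c\<bar> \<le> spectral_norm H"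
  unfolding spectral_norm_def using assms finite_eigenvalues_symmetric[OF assms(1)] by simp

lemma norm_matrix_vector_le_spectral_norm:
  fixes H :: "real^'n^'n"
  assumes "transpose H = H"
  shows "norm (H *v x) \<le> spectral_norm H * norm x"
proof -
  obtain c where "c \<in> eigenvalues H" "norm (H *v x) \<le> \<bar>c\<bar> * norm x"
    using symmetric_matrix_dominant_eigenvalue[OF assms] by metis
  then show ?thesis
    using abs_eigenvalue_le_spectral_norm[OF assms] by (meson mult_right_mono norm_ge_zero order_trans)
qed

lemma spectral_norm_nonneg:
  fixes H :: "real^'n^'n"
  assumes "transpose H = H"
  shows "0 \<le> spectral_norm H"
  using symmetric_matrix_dominant_eigenvalue[OF assms] abs_eigenvalue_le_spectral_norm[OF assms]
  by (meson abs_ge_zero order_trans)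

section \<open>Perturbation bounds\<close>

lemma abs_sq_diff_le:
  fixes p r q l \<epsilon> :: real
  assumes close: "\<bar>r - p\<bar> \<le> \<epsilon> * q" and "0 \<le> p" "0 \<le> r" and "p \<le> l * q"
  shows "\<bar>r\<^sup>2 - p\<^sup>2\<bar> \<le> \<epsilon> * (\<epsilon> + 2 * l) * q\<^sup>2"
proof -
  have "r\<^sup>2 - p\<^sup>2 = (r - p) * (r + p)" by (simp add: power2_eq_square algebra_simps)
  then have "\<bar>r\<^sup>2 - p\<^sup>2\<bar> = \<bar>r - p\<bar> * (r + p)" using assms by (simp add: abs_mult)
  also have "\<dots> \<le> (\<epsilon> * q) * (\<epsilon> * q + 2 * (l * q))"
    using assms by (intro mult_mono) auto
  also have "\<dots> = \<epsilon> * (\<epsilon> + 2 * l) * q\<^sup>2" by (simp add: power2_eq_square algebra_simps)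
  finally show ?thesis .
qed

lemma norm_sq_perturbation:
  fixes M H :: "real^'n^'n"
  assumes H: "\<And>x. norm (H *v x) \<le> \<epsilon> * norm x" and M: "\<And>x. norm (M *v x) \<le> l * norm x"
  shows "\<bar>norm ((M + H) *v x) ^ 2 - norm (M *v x) ^ 2\<bar> \<le> \<epsilon> * (\<epsilon> + 2 * l) * norm x ^ 2"
proof (rule abs_sq_diff_le)
  have "\<bar>norm ((M + H) *v x) - norm (M *v x)\<bar> \<le> norm (H *v x)"
    using norm_triangle_ineq3[of "M *v x + H *v x" "M *v x"]
    by (simp add: matrix_vector_mult_add_rdistrib)
  then show "\<bar>norm ((M + H) *v x) - norm (M *v x)\<bar> \<le> \<epsilon> * norm x" using H order_trans by blast
qed (use M in auto)

lemma perturbed_square_residual: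
  fixes M H :: "real^'n^'n"
  assumes H: "\<And>x. norm (H *v x) \<le> \<epsilon> * norm x" "0 \<le> \<epsilon>"
    and M: "\<And>x. norm (M *v x) \<le> l * norm x"
    and eig: "M *v x = c *s x" and "\<bar>c\<bar> \<le> l"
  shows "norm (((M + H) ** (M + H)) *v x - c\<^sup>2 *s x) \<le> \<epsilon> * (\<epsilon> + 2 * l) * norm x"
proof -
  let ?N = "M + H"
  have "?N *v x = c *\<^sub>R x + H *v x"
    using eig by (simp add: matrix_vector_mult_add_rdistrib scalar_mult_eq_scaleR)
  then have "(?N ** ?N) *v x - c\<^sup>2 *s x = c *\<^sub>R (H *v x) + ?N *v (H *v x)"
    by (simp add: matrix_vector_mul_assoc[symmetric] matrix_vector_right_distrib
        matrix_vector_mult_scaleR scalar_mult_eq_scaleR power2_eq_square algebra_simps)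
  also have "norm \<dots> \<le> \<bar>c\<bar> * norm (H *v x) + (norm (M *v (H *v x)) + norm (H *v (H *v x)))"
    by (metis matrix_vector_mult_add_rdistrib norm_scaleR norm_triangle_le add_left_mono
        norm_triangle_ineq)
  also have "\<dots> \<le> l * (\<epsilon> * norm x) + (l * (\<epsilon> * norm x) + \<epsilon> * (\<epsilon> * norm x))"
    using assms by (intro add_mono mult_mono order_trans[OF M] order_trans[OF H(1)]) auto
  also have "\<dots> = \<epsilon> * (\<epsilon> + 2 * l) * norm x" by (simp add: algebra_simps)
  finally show ?thesis .
qed

lemma sin_line_angle:
  "sin (line_angle x y) = sqrt (1 - (x \<bullet> y)\<^sup>2 / (norm x ^ 2 * norm y ^ 2))"
proof -
  have "\<bar>x \<bullet> y\<bar> / (norm x * norm y) \<le> 1"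
    using Cauchy_Schwarz_ineq2[of x y] by (cases "norm x * norm y = 0") (auto simp: divide_le_eq_1)
  then show ?thesis
    unfolding line_angle_def by (simp add: sin_arccos_abs power_divide power_mult_distrib)
qed

lemma sin_line_angle_eigenvector_le:
  fixes B :: "real^'n^'n"
  assumes sym: "transpose B = B" and basis: "orthogonal_eigenbasis B b v"
    and i: "i \<in> {1..CARD('n)}"
    and gap: "\<And>j. j \<in> {1..CARD('n)} \<Longrightarrow> j \<noteq> i \<Longrightarrow> \<Delta> \<le> \<bar>c - b j\<bar>" and "0 < \<Delta>"
    and "x \<noteq> 0"
  shows "sin (line_angle x (v i)) \<le> norm (B *v x - c *s x) / (\<Delta> * norm x)"
proof -
  let ?I = "{1..CARD('n)}" and ?r = "B *v x - c *s x"
  define d where "d j = (x \<bullet> v j)\<^sup>2 / (v j \<bullet> v j)" for j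
  have d_nonneg: "0 \<le> d j" for j by (simp add: d_def)
  have "norm x ^ 2 = (\<Sum>j\<in>?I. d j)"
    unfolding d_def by (rule orthogonal_eigenbasis_parseval[OF basis])
  then have x_sq: "norm x ^ 2 = d i + (\<Sum>j\<in>?I - {i}. d j)" using i by (simp add: sum.remove)
  have residual_inner: "?r \<bullet> v j = (b j - c) * (x \<bullet> v j)" if "j \<in> ?I" for j
    using orthogonal_eigenbasis_inner[OF sym basis that]
    by (simp add: inner_diff_left scalar_mult_eq_scaleR algebra_simps)
  have "norm ?r ^ 2 = (\<Sum>j\<in>?I. (?r \<bullet> v j)\<^sup>2 / (v j \<bullet> v j))"
    by (rule orthogonal_eigenbasis_parseval[OF basis])
  also have "\<dots> = (\<Sum>j\<in>?I. (c - b j)\<^sup>2 * d j)"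
    by (intro sum.cong refl) (simp add: d_def residual_inner power_mult_distrib power2_commute)
  also have "\<dots> \<ge> (\<Sum>j\<in>?I - {i}. (c - b j)\<^sup>2 * d j)"
    using i d_nonneg by (simp add: sum.remove)
  finally have "(\<Sum>j\<in>?I - {i}. (c - b j)\<^sup>2 * d j) \<le> norm ?r ^ 2" .
  moreover have "\<Delta>\<^sup>2 * (\<Sum>j\<in>?I - {i}. d j) \<le> (\<Sum>j\<in>?I - {i}. (c - b j)\<^sup>2 * d j)"
    unfolding sum_distrib_left using gap \<open>0 < \<Delta>\<close> d_nonneg
    by (intro sum_mono mult_right_mono) (auto simp: abs_le_square_iff[symmetric])
  ultimately have "\<Delta>\<^sup>2 * (norm x ^ 2 - d i) \<le> norm ?r ^ 2" using x_sq by simp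
  then have "norm x ^ 2 - d i \<le> norm ?r ^ 2 / \<Delta>\<^sup>2"
    using \<open>0 < \<Delta>\<close> by (simp add: pos_le_divide_eq mult.commute)
  then have "(norm x ^ 2 - d i) / norm x ^ 2 \<le> norm ?r ^ 2 / \<Delta>\<^sup>2 / norm x ^ 2"
    by (rule divide_right_mono) simp
  then have "1 - d i / norm x ^ 2 \<le> (norm ?r / (\<Delta> * norm x))\<^sup>2"
    using \<open>x \<noteq> 0\<close> by (simp add: diff_divide_distrib power_divide power_mult_distrib)
  moreover have "(x \<bullet> v i)\<^sup>2 / (norm x ^ 2 * norm (v i) ^ 2) = d i / norm x ^ 2"
    by (simp add: d_def power2_norm_eq_inner)
  ultimately have "sin (line_angle x (v i)) \<le> sqrt ((norm ?r / (\<Delta> * norm x))\<^sup>2)"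
    unfolding sin_line_angle by (metis real_sqrt_le_mono)
  then show ?thesis using \<open>0 < \<Delta>\<close> by simp
qed

lemma symmetric_right_summand:
  fixes M H :: "real^'n^'n"
  assumes "transpose M = M" "transpose (M + H) = M + H"
  shows "transpose H = H"
  using assms by (auto simp: transpose_def vec_eq_iff)

lemma abs_sq_eigenvalue_perturbation_le:
  fixes M H :: "real^'n^'n"
  assumes "transpose M = M" "orthogonal_eigenbasis M a u"
    and sorted_a: "\<And>j k. 1 \<le> j \<Longrightarrow> j \<le> k \<Longrightarrow> k \<le> CARD('n) \<Longrightarrow> \<bar>a k\<bar> \<le> \<bar>a j\<bar>"
    and "transpose (M + H) = M + H" "orthogonal_eigenbasis (M + H) b v"
    and "\<And>j k. 1 \<le> j \<Longrightarrow> j \<le> k \<Longrightarrow> k \<le> CARD('n) \<Longrightarrow> \<bar>b k\<bar> \<le> \<bar>b j\<bar>"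
    and "i \<in> {1..CARD('n)}"
  shows "\<bar>(a i)\<^sup>2 - (b i)\<^sup>2\<bar> \<le> spectral_norm H * (spectral_norm H + 2 * \<bar>a 1\<bar>)"
proof -
  have "\<bar>norm ((M + H) *v x) ^ 2 - norm (M *v x) ^ 2\<bar>
      \<le> spectral_norm H * (spectral_norm H + 2 * \<bar>a 1\<bar>) * norm x ^ 2" for x
    using symmetric_right_summand[OF assms(1,4)] assms(1-3)
    by (intro norm_sq_perturbation norm_matrix_vector_le_spectral_norm
        norm_matrix_vector_le_leading_eigenvalue)
  from abs_eigenvalue_sq_diff_le[OF assms(1-6) this assms(7)] show ?thesis .
qed

lemma sin_eigenvector_perturbation_le:
  fixes M H :: "real^'n^'n"
  assumes "transpose M = M" "orthogonal_eigenbasis M a u"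
    and "\<And>j k. 1 \<le> j \<Longrightarrow> j \<le> k \<Longrightarrow> k \<le> CARD('n) \<Longrightarrow> \<bar>a k\<bar> \<le> \<bar>a j\<bar>"
    and "transpose (M + H) = M + H" "orthogonal_eigenbasis (M + H) b v"
    and i: "i \<in> {1..CARD('n)}"
    and gap: "\<And>j. j \<in> {1..CARD('n)} \<Longrightarrow> j \<noteq> i \<Longrightarrow> \<Delta> \<le> \<bar>(a i)\<^sup>2 - (b j)\<^sup>2\<bar>" and "0 < \<Delta>"
  shows "sin (line_angle (u i) (v i)) \<le> spectral_norm H * (spectral_norm H + 2 * \<bar>a 1\<bar>) / \<Delta>"
proof -
  let ?e = "spectral_norm H * (spectral_norm H + 2 * \<bar>a 1\<bar>)"
  have "transpose H = H" using assms(1,4) by (rule symmetric_right_summand)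
  have eig: "u i \<noteq> 0" "M *v u i = a i *s u i"
    using assms(2) i by (auto simp: orthogonal_eigenbasis_def)
  have "sin (line_angle (u i) (v i))
      \<le> norm (((M + H) ** (M + H)) *v u i - (a i)\<^sup>2 *s u i) / (\<Delta> * norm (u i))"
    using assms(4,5) i gap \<open>0 < \<Delta>\<close> eig
    by (intro sin_line_angle_eigenvector_le) (auto simp: matrix_transpose_mul orthogonal_eigenbasis_square)
  also have "\<dots> \<le> ?e * norm (u i) / (\<Delta> * norm (u i))"
    using \<open>transpose H = H\<close> assms(1-3) i eig \<open>0 < \<Delta>\<close>
    by (intro divide_right_mono perturbed_square_residual norm_matrix_vector_le_spectral_norm
        spectral_norm_nonneg norm_matrix_vector_le_leading_eigenvalue) auto
  also have "\<dots> = ?e / \<Delta>" using eig by simp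
  finally show ?thesis .
qed

lemma inj_on_if_abs_strictly_decreasing:
  fixes a :: "nat \<Rightarrow> real"
  assumes "\<And>i j. 1 \<le> i \<Longrightarrow> i < j \<Longrightarrow> j \<le> n \<Longrightarrow> \<bar>a i\<bar> > \<bar>a j\<bar>"
  shows "inj_on a {1..n}"
proof (rule inj_onI)
  fix i j assume "i \<in> {1..n}" "j \<in> {1..n}" "a i = a j"
  then show "i = j" using assms[of i j] assms[of j i] by (cases i j rule: linorder_cases) auto
qed

lemma abs_antimono_if_abs_strictly_decreasing:
  fixes a :: "nat \<Rightarrow> real"
  assumes "\<And>i j. 1 \<le> i \<Longrightarrow> i < j \<Longrightarrow> j \<le> n \<Longrightarrow> \<bar>a i\<bar> > \<bar>a j\<bar>"
    and "1 \<le> j" "j \<le> k" "k \<le> n"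
  shows "\<bar>a k\<bar> \<le> \<bar>a j\<bar>"
  using assms(1)[of j k] assms(2-4) by (cases "j = k") auto

theorem theorem5p9:
  fixes M H :: "real^'n^'n"
    and lam nu :: "nat \<Rightarrow> real"
    and u v :: "nat \<Rightarrow> real^'n"
  defines "n \<equiv> CARD('n)"
  assumes symM: "transpose M = M"
    and symMH: "transpose (M + H) = M + H"
    and specM: "eigenvalues M = lam ` {1..n}"
    and ordM: "\<And>i j. 1 \<le> i \<Longrightarrow> i < j \<Longrightarrow> j \<le> n \<Longrightarrow> \<bar>lam i\<bar> > \<bar>lam j\<bar>"
    and specMH: "eigenvalues (M + H) = nu ` {1..n}"
    and ordMH: "\<And>i j. 1 \<le> i \<Longrightarrow> i < j \<Longrightarrow> j \<le> n \<Longrightarrow> \<bar>nu i\<bar> > \<bar>nu j\<bar>"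
    and eigu: "\<And>i. 1 \<le> i \<Longrightarrow> i \<le> n \<Longrightarrow> u i \<noteq> 0 \<and> M *v u i = lam i *s u i"
    and eigv: "\<And>i. 1 \<le> i \<Longrightarrow> i \<le> n \<Longrightarrow> v i \<noteq> 0 \<and> (M + H) *v v i = nu i *s v i"
  shows "\<forall>i\<in>{1..n}.
           \<bar>(lam i)\<^sup>2 - (nu i)\<^sup>2\<bar> \<le> spectral_norm H * (spectral_norm H + 2 * \<bar>lam 1\<bar>)
         \<and> (let \<Delta> = Min {\<bar>(lam i)\<^sup>2 - (nu j)\<^sup>2\<bar> | j. j \<in> {1..n} \<and> j \<noteq> i}
            in n \<ge> 2 \<and> \<Delta> > 0 \<longrightarrow>
               sin (line_angle (u i) (v i))
                 \<le> spectral_norm H * (spectral_norm H + 2 * \<bar>lam 1\<bar>) / \<Delta>)"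
proof -
  note ordM = ordM[unfolded n_def] and ordMH = ordMH[unfolded n_def]
  have basis_M: "orthogonal_eigenbasis M lam u"
    using symM inj_on_if_abs_strictly_decreasing[OF ordM] eigu
    by (rule orthogonal_eigenbasisI) (simp_all add: n_def)
  have basis_MH: "orthogonal_eigenbasis (M + H) nu v"
    using symMH inj_on_if_abs_strictly_decreasing[OF ordMH] eigv
    by (rule orthogonal_eigenbasisI) (simp_all add: n_def)
  note sorted = abs_antimono_if_abs_strictly_decreasing[OF ordM]
    abs_antimono_if_abs_strictly_decreasing[OF ordMH]
  show ?thesis unfolding Let_def
  proof (intro ballI conjI impI)
    fix i assume "i \<in> {1..n}"
    then have i: "i \<in> {1..CARD('n)}" by (simp add: n_def)
    show "\<bar>(lam i)\<^sup>2 - (nu i)\<^sup>2\<bar> \<le> spectral_norm H * (spectral_norm H + 2 * \<bar>lam 1\<bar>)"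
      using symM basis_M sorted(1) symMH basis_MH sorted(2) i by (rule abs_sq_eigenvalue_perturbation_le)
    assume "2 \<le> n \<and> 0 < Min {\<bar>(lam i)\<^sup>2 - (nu j)\<^sup>2\<bar> | j. j \<in> {1..n} \<and> j \<noteq> i}"
    then show "sin (line_angle (u i) (v i))
        \<le> spectral_norm H * (spectral_norm H + 2 * \<bar>lam 1\<bar>)
           / Min {\<bar>(lam i)\<^sup>2 - (nu j)\<^sup>2\<bar> | j. j \<in> {1..n} \<and> j \<noteq> i}"
      using symM basis_M sorted(1) symMH basis_MH i
      by (intro sin_eigenvector_perturbation_le) (auto intro: Min_le simp: n_def)
  qed
qed

end
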